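(* Let $X$ be a generalized homology sphere of dimension $2n$. Suppose that for every vertex $v$ of $X$ one has $(-1)^nh_{\mathrm{Lk}_v}(-1)\geq0$. Then the coefficient of $t^n$ in $\gamma_X$ (its highest possible coefficient) is nonnegative.
   Context: Simplicial complexes contain the empty face; $\#\sigma$ is the number of vertices of $\sigma$. Link: $\mathrm{Lk}_\sigma=\{\tau\in X:\sigma\cup\tau\in X,\ \sigma\cap\tau=\emptyset\}$. Generalized homology sphere of dimension $m-1$: every link $\mathrm{Lk}_\sigma$ (including $\sigma=\emptyset$) has the homology of a sphere of dimension $m-1-\#\sigma$; links of vertices of $X$ are then generalized homology spheres of dimension $2n-1$. $f_X(t)=\sum_{\sigma\in X}t^{\#\sigma}$; for a generalized homology sphere of dimension $m-1$, $h_X$ is defined by $(1+t)^mh_X(\frac1{1+t})=t^mf_X(\frac1t)$ and $\gamma_X$ is the unique polynomial of degree at most $\lfloor m/2\rfloor$ with $h_X(t)=(1+t)^m\gamma_X(\frac{t}{(1+t)^2})$. *)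

theory Defs
  imports "HOL-Library.Function_Algebras" "HOL-Computational_Algebra.Polynomial"
begin

definition simplicial_complex :: "'v set set \<Rightarrow> bool" where
  "simplicial_complex X \<longleftrightarrow> finite X \<and> {} \<in> X \<and> (\<forall>\<sigma>\<in>X. \<forall>\<tau>. \<tau> \<subseteq> \<sigma> \<longrightarrow> \<tau> \<in> X)"

definition link :: "'v set set \<Rightarrow> 'v set \<Rightarrow> 'v set set" where
  "link X \<sigma> = {\<tau> \<in> X. \<sigma> \<union> \<tau> \<in> X \<and> \<sigma> \<inter> \<tau> = {}}"

text \<open>Chains are indexed by the number j of vertices of the faces (j = i + 1 for
  homological degree i; j = 0 is the empty face, i.e. augmented / reduced chains).\<close>

definition faces :: "'v set set \<Rightarrow> nat \<Rightarrow> 'v set set" where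
  "faces X j = {\<sigma> \<in> X. card \<sigma> = j}"

definition fscale :: "'k::field \<Rightarrow> ('v set \<Rightarrow> 'k) \<Rightarrow> ('v set \<Rightarrow> 'k)" where
  "fscale a c = (\<lambda>\<sigma>. a * c \<sigma>)"

definition chains :: "'k::field itself \<Rightarrow> 'v set set \<Rightarrow> nat \<Rightarrow> ('v set \<Rightarrow> 'k) set" where
  "chains _ X j = {c. \<forall>\<sigma>. \<sigma> \<notin> faces X j \<longrightarrow> c \<sigma> = 0}"

text \<open>Boundary map from j-vertex chains to (j-1)-vertex chains, orientation induced by the
  linear order of the vertices: the coefficient of face \<rho> is the signed sum over the
  cofaces \<rho> \<union> {v}, with sign (-1)^(number of vertices of \<rho> below v).\<close>

definition bd :: "'v::linorder set set \<Rightarrow> nat \<Rightarrow> ('v set \<Rightarrow> 'k::field) \<Rightarrow> ('v set \<Rightarrow> 'k)" where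
  "bd X j c = (\<lambda>\<rho>. if j \<ge> 1 \<and> \<rho> \<in> faces X (j - 1) then
      (\<Sum>v\<in>{v. v \<notin> \<rho> \<and> insert v \<rho> \<in> X}. (-1) ^ card {w\<in>\<rho>. w < v} * c (insert v \<rho>))
    else 0)"

text \<open>Reduced Betti number in homological degree j - 1.\<close>

definition rbetti :: "'k::field itself \<Rightarrow> 'v::linorder set set \<Rightarrow> nat \<Rightarrow> nat" where
  "rbetti K X j =
     vector_space.dim (fscale :: 'k \<Rightarrow> _) {c \<in> chains K X j. bd X j c = 0}
     - vector_space.dim (fscale :: 'k \<Rightarrow> _) (bd X (Suc j) ` chains K X (Suc j))"

text \<open>X has the (reduced, 'k-coefficient) homology of a sphere of dimension d = j - 1.\<close>

definition sphere_homology :: "'k::field itself \<Rightarrow> 'v::linorder set set \<Rightarrow> nat \<Rightarrow> bool" where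
  "sphere_homology K X j \<longleftrightarrow> (\<forall>i. rbetti K X i = (if i = j then 1 else 0))"

text \<open>Generalized homology sphere of dimension m - 1 (over the field 'k).\<close>

definition gen_homology_sphere :: "'k::field itself \<Rightarrow> 'v::linorder set set \<Rightarrow> nat \<Rightarrow> bool" where
  "gen_homology_sphere K X m \<longleftrightarrow> simplicial_complex X \<and>
     (\<forall>\<sigma>\<in>X. card \<sigma> \<le> m \<and> sphere_homology K (link X \<sigma>) (m - card \<sigma>))"

definition f_poly :: "'v set set \<Rightarrow> real poly" where
  "f_poly X = (\<Sum>\<sigma>\<in>X. monom 1 (card \<sigma>))"

definition h_poly :: "'v set set \<Rightarrow> nat \<Rightarrow> real poly" where
  "h_poly X m = (THE h. \<forall>t::real. t \<noteq> 0 \<and> t \<noteq> -1 \<longrightarrow>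
       (1 + t) ^ m * poly h (1 / (1 + t)) = t ^ m * poly (f_poly X) (1 / t))"

definition gamma_poly :: "'v set set \<Rightarrow> nat \<Rightarrow> real poly" where
  "gamma_poly X m = (THE g. degree g \<le> m div 2 \<and> (\<forall>t::real. t \<noteq> -1 \<longrightarrow>
       poly (h_poly X m) t = (1 + t) ^ m * poly g (t / (1 + t) ^ 2)))"

lemma vector_space_fscale: "vector_space (fscale :: 'k::field \<Rightarrow> ('v set \<Rightarrow> 'k) \<Rightarrow> _)"
  by unfold_locales (auto simp: fscale_def algebra_simps fun_eq_iff)

end

theory Submission
  imports Defs
begin

(* Write h for h_X and m = 2n + 1. Every link of X has the Euler characteristic of a sphere
   (rank-nullity applied to the reduced chain complex), so X is Eulerian, and the Dehn-Sommerville
   relations make h palindromic of degree m. Hence h = sum_i gamma_i t^i (1 + t)^(m - 2i), and since m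
   is odd, h = (1 + t) Q with Q(-1) = (-1)^n gamma_n. Counting faces through their vertices gives
   sum_v h_(Lk v)(t) = m h(t) + (1 - t) h'(t); at t = -1 the first term vanishes and h'(-1) = Q(-1),
   so sum_v (-1)^n h_(Lk v)(-1) = 2 gamma_n, a sum of nonnegative terms. *)

section \<open>Rank-nullity for finitely spanned subspaces\<close>

context vector_space
begin

lemma span_inter_span_disjoint:
  assumes "independent B" "finite B" "K \<subseteq> B" "C \<subseteq> B" "K \<inter> C = {}"
    and "x \<in> span K" "x \<in> span C"
  shows "x = 0"
proof -
  have fK: "finite K" and fC: "finite C" using assms(2-4) finite_subset by blast+
  obtain a where a: "x = (\<Sum>v\<in>K. a v *s v)" using assms(6) span_finite[OF fK] by auto
  obtain b where b: "x = (\<Sum>v\<in>C. b v *s v)" using assms(7) span_finite[OF fC] by auto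
  define u where "u v = (if v \<in> K then a v else - b v)" for v
  have "(\<Sum>v\<in>K \<union> C. u v *s v) = (\<Sum>v\<in>K. u v *s v) + (\<Sum>v\<in>C. u v *s v)"
    using fK fC assms(5) by (simp add: sum.union_disjoint)
  also have "(\<Sum>v\<in>K. u v *s v) = x" using a by (simp add: u_def)
  also have "(\<Sum>v\<in>C. u v *s v) = - x"
    using b assms(5) by (auto simp: u_def sum_negf[symmetric] intro!: sum.cong)
  finally have "(\<Sum>v\<in>K \<union> C. u v *s v) = 0" by simp
  then have "\<forall>v\<in>K. u v = 0"
    using independentD[OF assms(1)] fK fC assms(3,4) by blast
  then have "\<forall>v\<in>K. a v = 0" by (simp add: u_def)
  then show ?thesis using a by simp
qed

lemma dim_subset_finitely_spanned:
  assumes "A \<subseteq> Z" "Z \<subseteq> span B0" "finite B0"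
  shows "dim A \<le> dim Z"
proof -
  obtain B where B: "B \<subseteq> Z" "independent B" "Z \<subseteq> span B" "card B = dim Z"
    using basis_exists by blast
  have "finite B" using independent_span_bound[OF assms(3) B(2)] B(1) assms(2) by blast
  then show ?thesis using dim_le_card[of A B] assms(1) B by auto
qed

lemma dim_singleton_zero: "dim {0} = 0"
  using dim_le_card[of "{0}" "{}"] by simp

lemma span_image_eq_span_image_complement:
  assumes f: "module_hom scale scale f" and S: "S \<subseteq> span (K \<union> C)" "C \<subseteq> S"
    and K: "\<forall>x\<in>K. f x = 0"
  shows "span (f ` S) = span (f ` C)"
proof -
  interpret f: module_hom scale scale f by (rule f)
  have "f ` S \<subseteq> span (f ` C)"
  proof
    fix y assume "y \<in> f ` S"
    then obtain x where x: "x \<in> S" "y = f x" by auto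
    then have "x \<in> span (K \<union> C)" using S(1) by auto
    then obtain p q where pq: "x = p + q" "p \<in> span K" "q \<in> span C"
      unfolding span_Un by auto
    have "f p = 0" using f.eq_0_on_span[OF _ pq(2)] K by auto
    then have "y = f q" using x pq by (simp add: f.add)
    then show "y \<in> span (f ` C)" using pq(3) f.span_image by auto
  qed
  moreover have "f ` C \<subseteq> span (f ` S)"
    using S(2) by (auto intro: span_base)
  ultimately show ?thesis by (rule span_eq[THEN iffD2, OF conjI])
qed

lemma dim_eq_dim_kernel_add_dim_image:
  assumes f: "module_hom scale scale f" and S: "subspace S" "S \<subseteq> span B0" "finite B0"
  shows "dim S = dim {x\<in>S. f x = 0} + dim (f ` S)"
proof -
  interpret f: module_hom scale scale f by (rule f)
  let ?Z = "{x\<in>S. f x = 0}"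
  have "subspace ?Z"
    using subspace_inter[OF S(1) f.subspace_kernel] by (simp add: Int_def)
  obtain K where K: "K \<subseteq> ?Z" "independent K" "?Z \<subseteq> span K" "card K = dim ?Z"
    using basis_exists by blast
  obtain B where B: "K \<subseteq> B" "B \<subseteq> S" "independent B" "S \<subseteq> span B"
    using maximal_independent_subset_extend[of K S] K by auto
  have finB: "finite B" using independent_span_bound[OF S(3) B(3)] B(2) S(2) by blast
  define C where "C = B - K"
  have injC: "inj_on f (span C)"
  proof (subst f.inj_on_iff_eq_0[OF subspace_span], intro ballI impI)
    fix x assume x: "x \<in> span C" "f x = 0"
    have "x \<in> S" using x(1) span_minimal[of C S] S(1) B(2) C_def by auto
    then have "x \<in> span K" using x K(3) by auto
    then show "x = 0" using span_inter_span_disjoint[OF B(3) finB B(1), of C x] x(1) C_def by auto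
  qed
  have "K \<union> C = B" using B(1) C_def by auto
  have "span (f ` S) = span (f ` C)"
  proof (rule span_image_eq_span_image_complement[OF f])
    show "S \<subseteq> span (K \<union> C)" using B(4) \<open>K \<union> C = B\<close> by simp
    show "C \<subseteq> S" using B(2) C_def by auto
    show "\<forall>x\<in>K. f x = 0" using K(1) by auto
  qed
  then have "dim (f ` S) = dim (f ` C)" by (rule span_eq_dim)
  also have "\<dots> = card (f ` C)"
    using f.independent_injective_image[OF independent_mono[OF B(3)] injC] C_def
    by (intro dim_eq_card_independent) auto
  also have "\<dots> = card B - card K"
    using card_image[OF inj_on_subset[OF injC span_superset]] C_def B(1) finB
    by (simp add: card_Diff_subset finite_subset)
  finally have "dim (f ` S) = card B - card K" .
  moreover have "dim S = card B" using basis_card_eq_dim[OF B(2,4,3)] by simp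
  ultimately show ?thesis using K(4) card_mono[OF finB B(1)] by simp
qed

end

lemma simplicial_complex_finite: "simplicial_complex X \<Longrightarrow> finite X"
  by (simp add: simplicial_complex_def)

lemma simplicial_complex_subset:
  "simplicial_complex X \<Longrightarrow> \<sigma> \<in> X \<Longrightarrow> \<tau> \<subseteq> \<sigma> \<Longrightarrow> \<tau> \<in> X"
  by (auto simp: simplicial_complex_def)

lemma simplicial_complex_finite_face:
  assumes "simplicial_complex X" "\<sigma> \<in> X"
  shows "finite \<sigma>"
proof -
  have "Pow \<sigma> \<subseteq> X" using simplicial_complex_subset[OF assms] by auto
  then show ?thesis using simplicial_complex_finite[OF assms(1)] finite_subset by fastforce
qed

lemma simplicial_complex_link:
  assumes X: "simplicial_complex X" and "\<sigma> \<in> X"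
  shows "simplicial_complex (link X \<sigma>)"
  unfolding simplicial_complex_def
proof (intro conjI ballI allI impI)
  show "finite (link X \<sigma>)"
    using simplicial_complex_finite[OF X] by (rule rev_finite_subset) (auto simp: link_def)
  show "{} \<in> link X \<sigma>" using X \<open>\<sigma> \<in> X\<close> by (auto simp: link_def simplicial_complex_def)
next
  fix \<rho> \<tau> assume "\<rho> \<in> link X \<sigma>" "\<tau> \<subseteq> \<rho>"
  moreover have "\<sigma> \<union> \<tau> \<subseteq> \<sigma> \<union> \<rho>" using \<open>\<tau> \<subseteq> \<rho>\<close> by blast
  ultimately show "\<tau> \<in> link X \<sigma>"
    using simplicial_complex_subset[OF X] unfolding link_def by blast
qed

section \<open>Reduced homology and the Euler characteristic\<close>

interpretation V: vector_space "fscale :: 'k::field \<Rightarrow> ('v set \<Rightarrow> 'k) \<Rightarrow> _"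
  by (rule vector_space_fscale)

lemma sum_fun_apply: "(\<Sum>i\<in>A. f i) x = (\<Sum>i\<in>A. f i x)"
  by (induct A rule: infinite_finite_induct) auto

lemma fscale_apply [simp]: "fscale a c x = a * c x"
  by (simp add: fscale_def)

definition elementary_chain :: "'v set \<Rightarrow> 'v set \<Rightarrow> 'k::field" where
  "elementary_chain \<sigma> = (\<lambda>\<tau>. if \<tau> = \<sigma> then 1 else 0)"

lemma subspace_chains: "V.subspace (chains TYPE('k::field) X j)"
  by (auto simp: V.subspace_def chains_def)

lemma module_hom_bd: "module_hom fscale fscale (bd X j :: ('v::linorder set \<Rightarrow> 'k::field) \<Rightarrow> _)"
proof -
  have "bd X j (c1 + c2) = bd X j c1 + bd X j c2" for c1 c2 :: "'v set \<Rightarrow> 'k"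
    by (rule ext) (simp add: bd_def sum.distrib distrib_left)
  moreover have "bd X j (fscale a c) = fscale a (bd X j c)" for a and c :: "'v set \<Rightarrow> 'k"
    by (rule ext) (simp add: bd_def sum_distrib_left mult.left_commute)
  ultimately show ?thesis
    unfolding module_hom_iff_linear Vector_Spaces.linear_iff using vector_space_fscale by blast
qed

lemma chains_subset_span_elementary_chains:
  fixes X :: "'v set set"
  assumes "finite X"
  shows "chains TYPE('k::field) X j \<subseteq> V.span ((elementary_chain :: _ \<Rightarrow> _ \<Rightarrow> 'k) ` faces X j)"
    (is "_ \<subseteq> V.span ?I")
proof
  fix c :: "'v set \<Rightarrow> 'k" assume c: "c \<in> chains TYPE('k) X j"
  have "finite (faces X j)" using assms by (simp add: faces_def)
  then have "(\<Sum>\<sigma>\<in>faces X j. fscale (c \<sigma>) (elementary_chain \<sigma>)) \<tau> = c \<tau>" for \<tau>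
    using c by (simp add: sum_fun_apply elementary_chain_def chains_def if_distrib cong: if_cong)
  then have "c = (\<Sum>\<sigma>\<in>faces X j. fscale (c \<sigma>) (elementary_chain \<sigma>))" by auto
  also have "\<dots> \<in> V.span ?I"
    by (intro V.span_sum V.span_scale V.span_base) auto
  finally show "c \<in> V.span ?I" .
qed

lemma dim_chains:
  fixes X :: "'v set set"
  assumes "finite X"
  shows "V.dim (chains TYPE('k::field) X j) = card (faces X j)"
proof -
  let ?I = "(elementary_chain :: _ \<Rightarrow> _ \<Rightarrow> 'k) ` faces X j"
  have inj: "inj_on (elementary_chain :: _ \<Rightarrow> _ \<Rightarrow> 'k) (faces X j)"
    by (auto simp: inj_on_def elementary_chain_def fun_eq_iff split: if_splits)
  have "V.independent ?I"
    unfolding V.independent_explicit_module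
  proof (intro allI impI)
    fix t u v assume t: "finite t" "t \<subseteq> ?I" "(\<Sum>w\<in>t. fscale (u w) w) = 0" "v \<in> t"
    then obtain \<sigma> where \<sigma>: "v = elementary_chain \<sigma>" by auto
    have "u w * w \<sigma> = (if w = v then u w else 0)" if "w \<in> t" for w
    proof -
      obtain \<rho> where "w = elementary_chain \<rho>" using \<open>w \<in> t\<close> t(2) by auto
      then show ?thesis using \<sigma> by (auto simp: elementary_chain_def fun_eq_iff)
    qed
    then have "(\<Sum>w\<in>t. fscale (u w) w) \<sigma> = (\<Sum>w\<in>t. if w = v then u w else 0)"
      by (simp add: sum_fun_apply)
    then have "(\<Sum>w\<in>t. fscale (u w) w) \<sigma> = u v"
      using t(1,4) by simp
    then show "u v = 0" using t(3) by simp
  qed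
  moreover have "?I \<subseteq> chains TYPE('k) X j"
    by (auto simp: chains_def elementary_chain_def)
  ultimately have "V.dim (chains TYPE('k) X j) = card ?I"
    using V.basis_card_eq_dim chains_subset_span_elementary_chains[OF assms] by metis
  then show ?thesis using card_image[OF inj] by simp
qed

lemma sum_pairs_antisymmetric:
  fixes F :: "'a::linorder \<Rightarrow> 'a \<Rightarrow> 'b::ab_group_add"
  assumes "finite D" and sym: "\<And>v w. (v, w) \<in> D \<Longrightarrow> (w, v) \<in> D \<and> v \<noteq> w"
    and anti: "\<And>v w. (v, w) \<in> D \<Longrightarrow> F v w + F w v = 0"
  shows "(\<Sum>(v, w)\<in>D. F v w) = 0"
proof -
  let ?D1 = "{(v, w)\<in>D. v < w}" and ?swap = "\<lambda>(v, w). (w, v)"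
  have D: "D = ?D1 \<union> ?swap ` ?D1"
  proof
    show "D \<subseteq> ?D1 \<union> ?swap ` ?D1"
      using sym by (force simp: neq_iff image_iff)
  qed (use sym in auto)
  have fin: "finite ?D1" using \<open>finite D\<close> by (auto intro: rev_finite_subset)
  have "(\<Sum>(v, w)\<in>D. F v w) = (\<Sum>(v, w)\<in>?D1. F v w) + (\<Sum>(v, w)\<in>?swap ` ?D1. F v w)"
    by (subst D, rule sum.union_disjoint[OF fin finite_imageI[OF fin]]) auto
  also have "(\<Sum>(v, w)\<in>?swap ` ?D1. F v w) = (\<Sum>(v, w)\<in>?D1. F w v)"
    by (subst sum.reindex) (auto simp: inj_on_def case_prod_beta)
  also have "(\<Sum>(v, w)\<in>?D1. F v w) + \<dots> = (\<Sum>(v, w)\<in>?D1. F v w + F w v)"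
    by (simp add: sum.distrib case_prod_beta)
  also have "\<dots> = 0" using anti by (intro sum.neutral) auto
  finally show ?thesis .
qed

lemma boundary_signs_anticommute:
  fixes a b :: "'v::linorder"
  assumes "finite \<pi>" "a < b" "a \<notin> \<pi>"
  shows "(-1::'k::comm_ring_1) ^ card {w\<in>\<pi>. w < a} * (-1) ^ card {w\<in>insert a \<pi>. w < b}
       = - ((-1) ^ card {w\<in>\<pi>. w < b} * (-1) ^ card {w\<in>insert b \<pi>. w < a})"
proof -
  have "{w\<in>insert a \<pi>. w < b} = insert a {w\<in>\<pi>. w < b}" "{w\<in>insert b \<pi>. w < a} = {w\<in>\<pi>. w < a}"
    using assms(2) by auto
  then show ?thesis using assms by (simp add: card_insert_disjoint mult_ac)
qed

lemma bd_bd_eq_0: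
  fixes L :: "'v::linorder set set" and c :: "'v set \<Rightarrow> 'k::field"
  assumes L: "simplicial_complex L"
  shows "bd L j (bd L (Suc j) c) = 0"
proof
  fix \<pi>
  show "bd L j (bd L (Suc j) c) \<pi> = 0 \<pi>"
  proof (cases "j \<ge> 1 \<and> \<pi> \<in> faces L (j - 1)")
    case False then show ?thesis unfolding bd_def[of L j] by auto
  next
    case True
    have \<pi>: "finite \<pi>" "\<pi> \<in> L" "card \<pi> = j - 1"
      using True simplicial_complex_finite_face[OF L] by (auto simp: faces_def)
    define s :: "'v set \<Rightarrow> 'v \<Rightarrow> 'k" where "s \<rho> v = (-1) ^ card {w\<in>\<rho>. w < v}" for \<rho> v
    define A where "A = {v. v \<notin> \<pi> \<and> insert v \<pi> \<in> L}"
    define A' where "A' v = {w. w \<notin> insert v \<pi> \<and> insert w (insert v \<pi>) \<in> L}" for v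
    define F where "F v w = s \<pi> v * (s (insert v \<pi>) w * c (insert w (insert v \<pi>)))" for v w
    have fin: "finite (\<Union>L)"
      using simplicial_complex_finite[OF L] simplicial_complex_finite_face[OF L] by auto
    have finA: "finite A" and finA': "finite (A' v)" for v
      unfolding A_def A'_def by (auto intro: finite_subset[OF _ fin])
    have "bd L (Suc j) c (insert v \<pi>) = (\<Sum>w\<in>A' v. s (insert v \<pi>) w * c (insert w (insert v \<pi>)))"
      if "v \<in> A" for v
      using that \<pi> True by (simp add: bd_def A_def A'_def s_def faces_def)
    then have "bd L j (bd L (Suc j) c) \<pi> = (\<Sum>v\<in>A. \<Sum>w\<in>A' v. F v w)"
      using True unfolding bd_def[of L j]
      by (simp add: A_def[symmetric] s_def[symmetric] F_def sum_distrib_left)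
    also have "\<dots> = (\<Sum>(v, w)\<in>Sigma A A'. F v w)"
      by (rule sum.Sigma[OF finA]) (simp add: finA')
    also have "\<dots> = 0"
    proof (rule sum_pairs_antisymmetric)
      show "finite (Sigma A A')" using finA finA' by auto
    next
      fix v w assume "(v, w) \<in> Sigma A A'"
      then have vw: "v \<notin> \<pi>" "w \<notin> \<pi>" "v \<noteq> w" "insert w (insert v \<pi>) \<in> L"
        by (auto simp: A_def A'_def)
      then have "insert w \<pi> \<in> L" using simplicial_complex_subset[OF L] by blast
      with vw show "(w, v) \<in> Sigma A A' \<and> v \<noteq> w"
        by (auto simp: A_def A'_def insert_commute)
      have anti: "F a b + F b a = 0" if "a < b" "a \<notin> \<pi>" for a b
        using boundary_signs_anticommute[OF \<pi>(1) that, where 'k = 'k]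
        by (simp add: F_def s_def insert_commute algebra_simps)
      show "F v w + F w v = 0"
      proof (cases "v < w")
        case True then show ?thesis using anti vw(1) by blast
      next
        case False
        then have "w < v" using vw(3) by auto
        then show ?thesis using anti[of w v] vw(2) by (simp add: add.commute)
      qed
    qed
    finally show ?thesis by simp
  qed
qed

definition cycles :: "'k::field itself \<Rightarrow> 'v::linorder set set \<Rightarrow> nat \<Rightarrow> ('v set \<Rightarrow> 'k) set" where
  "cycles K X j = {c \<in> chains K X j. bd X j c = 0}"

definition boundaries :: "'k::field itself \<Rightarrow> 'v::linorder set set \<Rightarrow> nat \<Rightarrow> ('v set \<Rightarrow> 'k) set" where
  "boundaries K X j = bd X j ` chains K X j"

lemma rbetti_eq: "rbetti K X j = V.dim (cycles K X j) - V.dim (boundaries K X (Suc j))"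
  by (simp add: rbetti_def cycles_def boundaries_def)

lemma card_faces_eq_dim_cycles_add_dim_boundaries:
  assumes "finite X"
  shows "card (faces X j) = V.dim (cycles TYPE('k::field) X j) + V.dim (boundaries TYPE('k) X j)"
proof -
  have "V.dim (chains TYPE('k) X j) = V.dim (cycles TYPE('k) X j) + V.dim (boundaries TYPE('k) X j)"
    unfolding cycles_def boundaries_def
    by (rule V.dim_eq_dim_kernel_add_dim_image[OF module_hom_bd subspace_chains
        chains_subset_span_elementary_chains[OF assms]]) (simp add: assms faces_def)
  then show ?thesis using dim_chains[OF assms, of j, where 'k = 'k] by simp
qed

lemma dim_boundaries_le_dim_cycles:
  assumes "simplicial_complex X"
  shows "V.dim (boundaries TYPE('k::field) X (Suc j)) \<le> V.dim (cycles TYPE('k) X j)"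
proof (rule V.dim_subset_finitely_spanned)
  show "boundaries TYPE('k) X (Suc j) \<subseteq> cycles TYPE('k) X j"
    using bd_bd_eq_0[OF assms] by (auto simp: boundaries_def cycles_def chains_def bd_def)
  show "cycles TYPE('k) X j \<subseteq> V.span (elementary_chain ` faces X j)"
    using chains_subset_span_elementary_chains simplicial_complex_finite[OF assms]
    by (auto simp: cycles_def)
  show "finite ((elementary_chain :: _ \<Rightarrow> _ \<Rightarrow> 'k) ` faces X j)"
    using simplicial_complex_finite[OF assms] by (simp add: faces_def)
qed

lemma dim_boundaries_eq_0:
  assumes "j = 0 \<or> faces X j = {}"
  shows "V.dim (boundaries TYPE('k::field) X j) = 0"
proof -
  have "bd X j c = 0" if "c \<in> chains TYPE('k) X j" for c
    using assms that by (auto simp: bd_def chains_def fun_eq_iff)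
  moreover have "0 \<in> chains TYPE('k) X j" by (simp add: chains_def)
  ultimately have "boundaries TYPE('k) X j = {0}" by (auto simp: boundaries_def)
  then show ?thesis by (simp add: V.dim_singleton_zero)
qed

theorem euler_characteristic_sphere_homology:
  fixes L :: "'v::linorder set set"
  assumes L: "simplicial_complex L" and "sphere_homology TYPE('k::field) L d"
  shows "(\<Sum>\<rho>\<in>L. (-1::int) ^ card \<rho>) = (-1) ^ d"
proof -
  define z where "z j = V.dim (cycles TYPE('k) L j)" for j
  define r where "r j = V.dim (boundaries TYPE('k) L j)" for j
  define N where "N = max d (Max (card ` L))"
  have finL: "finite L" using simplicial_complex_finite[OF L] .
  have N: "card \<rho> \<le> N" if "\<rho> \<in> L" for \<rho>
    using that finL by (simp add: N_def max.coboundedI2)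
  \<comment> \<open>\<open>rbetti\<close> is a truncated difference; it is exact because boundaries are cycles\<close>
  have "z j = r (Suc j) + (if j = d then 1 else 0)" for j
    using assms(2) dim_boundaries_le_dim_cycles[OF L, of j, where 'k = 'k]
    by (auto simp: sphere_homology_def rbetti_eq z_def r_def split: if_splits)
  then have faces: "int (card (faces L j)) = int (r (Suc j)) + int (r j) + (if j = d then 1 else 0)" for j
    using card_faces_eq_dim_cycles_add_dim_boundaries[OF finL, of j, where 'k = 'k]
    by (simp add: z_def r_def)
  have telescope: "(\<Sum>j\<le>M. (-1::int) ^ j * (int (r (Suc j)) + int (r j))) = (-1) ^ M * r (Suc M) + r 0"
    for M by (induction M) (auto simp: algebra_simps)
  have "r 0 = 0" by (simp add: r_def dim_boundaries_eq_0)
  moreover have "faces L (Suc N) = {}" using N by (force simp: faces_def)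
  then have "r (Suc N) = 0" by (simp add: r_def dim_boundaries_eq_0)
  moreover have "d \<le> N" by (simp add: N_def)
  moreover have "(\<Sum>\<rho>\<in>L. (-1::int) ^ card \<rho>) = (\<Sum>j\<le>N. \<Sum>\<rho>\<in>{\<rho>\<in>L. card \<rho> = j}. (-1) ^ card \<rho>)"
    by (rule sum.group[symmetric]) (use finL N in auto)
  moreover have "\<dots> = (\<Sum>j\<le>N. (-1) ^ j * (int (r (Suc j)) + int (r j)) + (if j = d then (-1) ^ j else 0))"
    by (intro sum.cong refl) (simp add: faces[unfolded faces_def] algebra_simps)
  ultimately show ?thesis by (simp add: sum.distrib telescope)
qed

lemma sum_cofaces_eq_sum_link:
  assumes X: "simplicial_complex X"
  shows "(\<Sum>\<tau>\<in>{\<tau>\<in>X. \<sigma> \<subseteq> \<tau>}. g \<tau>) = (\<Sum>\<rho>\<in>link X \<sigma>. g (\<sigma> \<union> \<rho>))"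
proof (rule sum.reindex_bij_witness[where i = "\<lambda>\<rho>. \<sigma> \<union> \<rho>" and j = "\<lambda>\<tau>. \<tau> - \<sigma>"])
  fix \<tau> assume "\<tau> \<in> {\<tau>\<in>X. \<sigma> \<subseteq> \<tau>}"
  then show "\<tau> - \<sigma> \<in> link X \<sigma>" "\<sigma> \<union> (\<tau> - \<sigma>) = \<tau>"
    using simplicial_complex_subset[OF X] by (auto simp: link_def Un_absorb1)
qed (auto simp: link_def Un_absorb1)

lemma gen_homology_sphere_simplicial_complex:
  "gen_homology_sphere K X m \<Longrightarrow> simplicial_complex X"
  by (simp add: gen_homology_sphere_def)

lemma gen_homology_sphere_card_le:
  "gen_homology_sphere K X m \<Longrightarrow> \<sigma> \<in> X \<Longrightarrow> card \<sigma> \<le> m"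
  by (simp add: gen_homology_sphere_def)

theorem gen_homology_sphere_eulerian:
  fixes X :: "'v::linorder set set"
  assumes sph: "gen_homology_sphere TYPE('k::field) X m" and "\<sigma> \<in> X"
  shows "(\<Sum>\<tau>\<in>{\<tau>\<in>X. \<sigma> \<subseteq> \<tau>}. (-1::int) ^ card \<tau>) = (-1) ^ m"
proof -
  have X: "simplicial_complex X" using gen_homology_sphere_simplicial_complex[OF sph] .
  have "card (\<sigma> \<union> \<rho>) = card \<sigma> + card \<rho>" if "\<rho> \<in> link X \<sigma>" for \<rho>
    using that simplicial_complex_finite_face[OF X] \<open>\<sigma> \<in> X\<close>
    by (intro card_Un_disjoint) (auto simp: link_def)
  then have "(\<Sum>\<tau>\<in>{\<tau>\<in>X. \<sigma> \<subseteq> \<tau>}. (-1::int) ^ card \<tau>)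
      = (-1) ^ card \<sigma> * (\<Sum>\<rho>\<in>link X \<sigma>. (-1) ^ card \<rho>)"
    by (simp add: sum_cofaces_eq_sum_link[OF X] sum_distrib_left power_add)
  also have "(\<Sum>\<rho>\<in>link X \<sigma>. (-1::int) ^ card \<rho>) = (-1) ^ (m - card \<sigma>)"
    using sph \<open>\<sigma> \<in> X\<close> simplicial_complex_link[OF X \<open>\<sigma> \<in> X\<close>]
    by (intro euler_characteristic_sphere_homology) (auto simp: gen_homology_sphere_def)
  finally show ?thesis
    using gen_homology_sphere_card_le[OF sph \<open>\<sigma> \<in> X\<close>] by (simp flip: power_add)
qed

lemma sum_pow_card_reciprocity:
  fixes X :: "'v::linorder set set" and x :: real
  assumes sph: "gen_homology_sphere TYPE('k::field) X m"
  shows "(\<Sum>\<tau>\<in>X. (-1 - x) ^ card \<tau>) = (-1) ^ m * (\<Sum>\<sigma>\<in>X. x ^ card \<sigma>)"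
proof -
  have X: "simplicial_complex X" using gen_homology_sphere_simplicial_complex[OF sph] .
  have finX: "finite X" using simplicial_complex_finite[OF X] .
  have binomial: "(1 + x) ^ card \<tau> = (\<Sum>\<sigma>\<in>{\<sigma>\<in>X. \<sigma> \<subseteq> \<tau>}. x ^ card \<sigma>)" if "\<tau> \<in> X" for \<tau>
  proof -
    have "(1 + x) ^ card \<tau> = (\<Prod>y\<in>\<tau>. x + 1)" by (simp add: add.commute)
    also have "\<dots> = (\<Sum>\<sigma>\<in>Pow \<tau>. (\<Prod>y\<in>\<sigma>. x) * (\<Prod>y\<in>\<tau> - \<sigma>. 1))"
      by (rule prod_add[OF simplicial_complex_finite_face[OF X that]])
    also have "\<dots> = (\<Sum>\<sigma>\<in>Pow \<tau>. x ^ card \<sigma>)" by simp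
    also have "Pow \<tau> = {\<sigma>\<in>X. \<sigma> \<subseteq> \<tau>}" using simplicial_complex_subset[OF X that] by auto
    finally show ?thesis .
  qed
  have "(\<Sum>\<tau>\<in>X. (-1 - x) ^ card \<tau>) = (\<Sum>\<tau>\<in>X. \<Sum>\<sigma>\<in>{\<sigma>\<in>X. \<sigma> \<subseteq> \<tau>}. (-1) ^ card \<tau> * x ^ card \<sigma>)"
  proof (intro sum.cong refl)
    fix \<tau> assume "\<tau> \<in> X"
    have "(-1 - x) ^ card \<tau> = (-1) ^ card \<tau> * (1 + x) ^ card \<tau>"
      by (simp flip: power_mult_distrib)
    then show "(-1 - x) ^ card \<tau> = (\<Sum>\<sigma>\<in>{\<sigma>\<in>X. \<sigma> \<subseteq> \<tau>}. (-1) ^ card \<tau> * x ^ card \<sigma>)"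
      by (simp add: binomial[OF \<open>\<tau> \<in> X\<close>] sum_distrib_left)
  qed
  also have "\<dots> = (\<Sum>\<sigma>\<in>X. x ^ card \<sigma> * (\<Sum>\<tau>\<in>{\<tau>\<in>X. \<sigma> \<subseteq> \<tau>}. (-1) ^ card \<tau>))"
    by (subst sum.swap_restrict[OF finX finX]) (simp add: sum_distrib_left mult.commute)
  also have "\<dots> = (\<Sum>\<sigma>\<in>X. x ^ card \<sigma> * (-1) ^ m)"
  proof (intro sum.cong refl)
    fix \<sigma> assume "\<sigma> \<in> X"
    have "(\<Sum>\<tau>\<in>{\<tau>\<in>X. \<sigma> \<subseteq> \<tau>}. (-1::real) ^ card \<tau>) = of_int ((-1) ^ m)"
      unfolding gen_homology_sphere_eulerian[OF sph \<open>\<sigma> \<in> X\<close>, symmetric] by simp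
    then show "x ^ card \<sigma> * (\<Sum>\<tau>\<in>{\<tau>\<in>X. \<sigma> \<subseteq> \<tau>}. (-1) ^ card \<tau>) = x ^ card \<sigma> * (-1) ^ m"
      by simp
  qed
  finally show ?thesis by (simp add: sum_distrib_left mult.commute)
qed

section \<open>The h-polynomial and the Dehn-Sommerville relations\<close>

lemma poly_eqI_infinite:
  fixes p q :: "real poly"
  assumes "infinite S" and "\<And>x. x \<in> S \<Longrightarrow> poly p x = poly q x"
  shows "p = q"
proof (rule ccontr)
  assume "p \<noteq> q"
  then have "finite {x. poly (p - q) x = 0}" by (intro poly_roots_finite) simp
  moreover have "S \<subseteq> {x. poly (p - q) x = 0}" using assms(2) by auto
  ultimately show False using assms(1) finite_subset by blast
qed

definition face_h_poly :: "'v set set \<Rightarrow> nat \<Rightarrow> real poly" where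
  "face_h_poly Y m = (\<Sum>\<sigma>\<in>Y. [:0, 1:] ^ card \<sigma> * [:1, -1:] ^ (m - card \<sigma>))"

lemma poly_face_h_poly: "poly (face_h_poly Y m) s = (\<Sum>\<sigma>\<in>Y. s ^ card \<sigma> * (1 - s) ^ (m - card \<sigma>))"
  by (simp add: face_h_poly_def poly_sum)

lemma poly_f_poly: "poly (f_poly Y) y = (\<Sum>\<sigma>\<in>Y. y ^ card \<sigma>)"
  by (simp add: f_poly_def poly_sum poly_monom)

lemma degree_face_h_poly:
  assumes "finite Y" "\<forall>\<sigma>\<in>Y. card \<sigma> \<le> m"
  shows "degree (face_h_poly Y m) \<le> m"
  unfolding face_h_poly_def
proof (rule degree_sum_le[OF assms(1)])
  fix \<sigma> assume "\<sigma> \<in> Y"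
  have "degree ([:0, 1:] ^ card \<sigma> * [:1, -1::real:] ^ (m - card \<sigma>)) \<le> card \<sigma> + (m - card \<sigma>)"
    by (intro order.trans[OF degree_mult_le] add_mono order.trans[OF degree_power_le]) auto
  then show "degree ([:0, 1:] ^ card \<sigma> * [:1, -1::real:] ^ (m - card \<sigma>)) \<le> m"
    using assms(2) \<open>\<sigma> \<in> Y\<close> by simp
qed

lemma face_h_poly_h_relation:
  fixes t :: real
  assumes "\<forall>\<sigma>\<in>Y. card \<sigma> \<le> m" "t \<noteq> 0" "t \<noteq> -1"
  shows "(1 + t) ^ m * poly (face_h_poly Y m) (1 / (1 + t)) = t ^ m * poly (f_poly Y) (1 / t)"
proof -
  have t: "1 + t \<noteq> 0" using assms(3) by (metis add.commute add_eq_0_iff)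
  have "(1 + t) ^ m * ((1 / (1 + t)) ^ k * (1 - 1 / (1 + t)) ^ (m - k)) = t ^ m * (1 / t) ^ k"
    if km: "k \<le> m" for k
  proof -
    obtain j where "m = k + j" using le_Suc_ex[OF km] by blast
    moreover have "1 - 1 / (1 + t) = t / (1 + t)" using t by (simp add: field_simps)
    ultimately show ?thesis using t assms(2) by (simp add: power_add power_divide field_simps)
  qed
  then show ?thesis
    using assms(1) by (simp add: poly_face_h_poly poly_f_poly sum_distrib_left)
qed

lemma h_poly_eq_face_h_poly:
  assumes "\<forall>\<sigma>\<in>Y. card \<sigma> \<le> m"
  shows "h_poly Y m = face_h_poly Y m"
  unfolding h_poly_def
proof (rule the_equality)
  show "\<forall>t::real. t \<noteq> 0 \<and> t \<noteq> -1 \<longrightarrow>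
      (1 + t) ^ m * poly (face_h_poly Y m) (1 / (1 + t)) = t ^ m * poly (f_poly Y) (1 / t)"
    using face_h_poly_h_relation[OF assms] by blast
next
  fix h assume h: "\<forall>t::real. t \<noteq> 0 \<and> t \<noteq> -1 \<longrightarrow>
      (1 + t) ^ m * poly h (1 / (1 + t)) = t ^ m * poly (f_poly Y) (1 / t)"
  show "h = face_h_poly Y m"
  proof (rule poly_eqI_infinite[of "{0<..<1}"])
    fix s :: real assume s: "s \<in> {0<..<1}"
    define t where "t = 1 / s - 1"
    have t: "t > 0" "1 / (1 + t) = s" using s by (auto simp: t_def field_simps)
    then have "(1 + t) ^ m * poly h s = (1 + t) ^ m * poly (face_h_poly Y m) s"
      using spec[OF h, of t] face_h_poly_h_relation[OF assms, of t] by simp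
    then show "poly h s = poly (face_h_poly Y m) s"
      using t(1) by simp
  qed simp
qed

lemma poly_face_h_poly_eq_scaled_f:
  fixes s :: real
  assumes "\<forall>\<sigma>\<in>Y. card \<sigma> \<le> m" "s \<noteq> 1"
  shows "poly (face_h_poly Y m) s = (1 - s) ^ m * (\<Sum>\<sigma>\<in>Y. (s / (1 - s)) ^ card \<sigma>)"
proof -
  have "s ^ k * (1 - s) ^ (m - k) = (1 - s) ^ m * (s / (1 - s)) ^ k" if "k \<le> m" for k
  proof -
    obtain j where "m = k + j" using le_Suc_ex[OF \<open>k \<le> m\<close>] by blast
    then show ?thesis using assms(2) by (simp add: power_add power_divide)
  qed
  then show ?thesis
    unfolding poly_face_h_poly sum_distrib_left using assms(1) by (intro sum.cong) auto
qed

theorem face_h_poly_self_reciprocal: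
  fixes X :: "'v::linorder set set" and s :: real
  assumes sph: "gen_homology_sphere TYPE('k::field) X m" and s: "s \<noteq> 0" "s \<noteq> 1"
  shows "poly (face_h_poly X m) s = s ^ m * poly (face_h_poly X m) (1 / s)"
proof -
  have bnd: "\<forall>\<sigma>\<in>X. card \<sigma> \<le> m" using gen_homology_sphere_card_le[OF sph] by blast
  define x where "x = s / (1 - s)"
  have "1 - s \<noteq> 0" "s - 1 \<noteq> 0" "1 / s \<noteq> 1" using s by simp_all
  have "s * (1 - 1 / s) = - (1 - s)" using s by (simp add: right_diff_distrib)
  then have inv: "s ^ m * (1 - 1 / s) ^ m = (- (1 - s)) ^ m"
    by (metis power_mult_distrib)
  have "(1 / s) / (1 - 1 / s) = -1 - x"
    using s \<open>1 - s \<noteq> 0\<close> \<open>s - 1 \<noteq> 0\<close> by (simp add: x_def field_simps)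
  have "s ^ m * poly (face_h_poly X m) (1 / s)
      = s ^ m * (1 - 1 / s) ^ m * (\<Sum>\<sigma>\<in>X. ((1 / s) / (1 - 1 / s)) ^ card \<sigma>)"
    using poly_face_h_poly_eq_scaled_f[OF bnd \<open>1 / s \<noteq> 1\<close>] by simp
  also have "\<dots> = (- (1 - s)) ^ m * (\<Sum>\<sigma>\<in>X. (-1 - x) ^ card \<sigma>)"
    by (simp only: inv \<open>(1 / s) / (1 - 1 / s) = -1 - x\<close>)
  also have "\<dots> = ((-1) ^ m * (-1) ^ m) * (1 - s) ^ m * (\<Sum>\<sigma>\<in>X. x ^ card \<sigma>)"
    unfolding sum_pow_card_reciprocity[OF sph] power_minus[of "1 - s"] by (simp only: ac_simps)
  also have "\<dots> = (1 - s) ^ m * (\<Sum>\<sigma>\<in>X. x ^ card \<sigma>)"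
    by (simp flip: power_add)
  also have "\<dots> = poly (face_h_poly X m) s"
    using s by (simp add: poly_face_h_poly_eq_scaled_f[OF bnd] x_def)
  finally show ?thesis ..
qed

(* Not a usable simp rule: it rewrites coeff p i to coeff p (m - i) and back, so the simplifier loops. *)
definition palindromic :: "nat \<Rightarrow> 'a::zero poly \<Rightarrow> bool" where
  "palindromic m p \<longleftrightarrow> (\<forall>i. coeff p i = (if i \<le> m then coeff p (m - i) else 0))"

lemma palindromicI_poly:
  fixes p :: "real poly"
  assumes deg: "degree p \<le> m" and "\<And>s. s \<noteq> 0 \<Longrightarrow> s \<noteq> 1 \<Longrightarrow> poly p s = s ^ m * poly p (1 / s)"
  shows "palindromic m p"
  unfolding palindromic_def
proof
  fix i
  define e where "e = m - degree p"
  have p: "p = monom 1 e * reflect_poly p"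
  proof (rule poly_eqI_infinite[of "{1<..<2}"])
    fix s :: real assume s: "s \<in> {1<..<2}"
    have "s ^ m = s ^ e * s ^ degree p" using deg by (simp add: e_def flip: power_add)
    then have "poly p s = s ^ e * (s ^ degree p * poly p (inverse s))"
      using assms(2)[of s] s by (simp add: divide_inverse)
    then show "poly p s = poly (monom 1 e * reflect_poly p) s"
      using s by (simp add: poly_monom poly_reflect_poly_nz)
  qed simp
  have "coeff p i = (if i < e then 0 else coeff (reflect_poly p) (i - e))"
    using arg_cong[OF p, of "\<lambda>q. coeff q i"] by (simp add: coeff_monom_mult)
  also have "\<dots> = (if i \<le> m then coeff p (m - i) else 0)"
  proof (cases "i < e")
    case True
    then show ?thesis using deg by (simp add: e_def coeff_eq_0)
  next
    case False
    then show ?thesis using deg by (simp add: e_def coeff_reflect_poly) arith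
  qed
  finally show "coeff p i = (if i \<le> m then coeff p (m - i) else 0)" .
qed

section \<open>The gamma-polynomial\<close>

lemma palindromic_diff:
  assumes "palindromic m p" "palindromic m q"
  shows "palindromic m (p - q)"
  unfolding palindromic_def
proof
  fix i
  have "coeff p i = (if i \<le> m then coeff p (m - i) else 0)"
    "coeff q i = (if i \<le> m then coeff q (m - i) else 0)"
    using assms unfolding palindromic_def by blast+
  then show "coeff (p - q) i = (if i \<le> m then coeff (p - q) (m - i) else 0)" by simp
qed

lemma palindromic_smult:
  assumes "palindromic m p"
  shows "palindromic m (smult c p)"
  unfolding palindromic_def
proof
  fix i
  have "coeff p i = (if i \<le> m then coeff p (m - i) else 0)"
    using assms unfolding palindromic_def by blast
  then show "coeff (smult c p) i = (if i \<le> m then coeff (smult c p) (m - i) else 0)" by simp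
qed

lemma palindromic_binomial: "palindromic m ([:1, 1::'a::comm_semiring_1:] ^ m)"
  unfolding palindromic_def
proof
  fix i
  have "degree ([:1, 1::'a:] ^ m) \<le> m" using degree_power_le[of "[:1, 1::'a:]" m] by simp
  then show "coeff ([:1, 1::'a:] ^ m) i = (if i \<le> m then coeff ([:1, 1:] ^ m) (m - i) else 0)"
    by (auto simp: coeff_linear_poly_power coeff_eq_0 binomial_symmetric[of i m])
qed

lemma palindromic_pCons_0:
  "palindromic (Suc (Suc m)) (pCons 0 q) \<Longrightarrow> palindromic m q"
  unfolding palindromic_def
proof
  fix i
  assume pal: "\<forall>i. coeff (pCons 0 q) i
    = (if i \<le> Suc (Suc m) then coeff (pCons 0 q) (Suc (Suc m) - i) else 0)"
  show "coeff q i = (if i \<le> m then coeff q (m - i) else 0)"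
    using pal[rule_format, of "Suc i"] pal[rule_format, of 0]
    by (cases "i \<le> m"; cases "i = Suc m") (auto simp: Suc_diff_le)
qed

lemma palindromic_coeff_0_eq_0:
  assumes "palindromic m r" "coeff r 0 = 0" "m < 2"
  shows "r = 0"
proof (rule poly_eqI)
  fix i
  have "coeff r i = (if i \<le> m then coeff r (m - i) else 0)"
    using assms(1) unfolding palindromic_def by blast
  moreover have "i = 0 \<or> m - i = 0" using assms(3) by linarith
  ultimately show "coeff r i = coeff 0 i"
    using assms(2) by (auto split: if_splits)
qed

definition gamma_expansion :: "nat \<Rightarrow> real poly \<Rightarrow> real poly" where
  "gamma_expansion m g = (\<Sum>i\<le>m div 2. smult (coeff g i) ([:0, 1:] ^ i * [:1, 1:] ^ (m - 2 * i)))"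

lemma gamma_expansion_const:
  "m < 2 \<Longrightarrow> gamma_expansion m [:c:] = smult c ([:1, 1:] ^ m)"
  by (simp add: gamma_expansion_def)

lemma gamma_expansion_pCons:
  "gamma_expansion (Suc (Suc m)) (pCons c g)
     = smult c ([:1, 1:] ^ Suc (Suc m)) + [:0, 1:] * gamma_expansion m g"
proof -
  have "Suc (Suc m) div 2 = Suc (m div 2)" by simp
  then have "gamma_expansion (Suc (Suc m)) (pCons c g) = smult c ([:1, 1:] ^ Suc (Suc m))
      + (\<Sum>i\<le>m div 2. smult (coeff g i) ([:0, 1:] ^ Suc i * [:1, 1:] ^ (m - 2 * i)))"
    unfolding gamma_expansion_def by (simp only: sum.atMost_Suc_shift) simp
  also have "(\<Sum>i\<le>m div 2. smult (coeff g i) ([:0, 1:] ^ Suc i * [:1, 1:] ^ (m - 2 * i)))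
      = [:0, 1:] * gamma_expansion m g"
    unfolding gamma_expansion_def sum_distrib_left
    by (intro sum.cong refl) (simp only: power_Suc mult_smult_right ac_simps)
  finally show ?thesis .
qed

theorem palindromic_gamma_expansion:
  "palindromic m p \<Longrightarrow> \<exists>g. degree g \<le> m div 2 \<and> p = gamma_expansion m g"
proof (induction m arbitrary: p rule: less_induct)
  case (less m)
  define c where "c = coeff p 0"
  define r where "r = p - smult c ([:1, 1:] ^ m)"
  have r: "palindromic m r" "coeff r 0 = 0"
    using less.prems
    by (simp_all add: r_def c_def palindromic_diff palindromic_smult palindromic_binomial
        coeff_linear_poly_power)
  show ?case
  proof (cases "m < 2")
    case True
    then have "p = gamma_expansion m [:c:]"
      using palindromic_coeff_0_eq_0[OF r] by (simp add: gamma_expansion_const r_def)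
    then show ?thesis by (intro exI[of _ "[:c:]"]) simp
  next
    case False
    then obtain m' where m: "m = Suc (Suc m')" by (metis add_2_eq_Suc le_Suc_ex not_less)
    obtain q where "r = pCons 0 q" using r(2) by (cases r) simp
    then have q: "r = [:0, 1:] * q" "palindromic m' q"
      using palindromic_pCons_0 r(1) by (simp_all add: m)
    obtain g where g: "degree g \<le> m' div 2" "q = gamma_expansion m' g"
      using less.IH[of m' q] q(2) m by auto
    have "p = gamma_expansion m (pCons c g)"
      using q(1) g(2) by (simp add: m gamma_expansion_pCons r_def del: mult_pCons_left)
    moreover have "degree (pCons c g) \<le> m div 2"
      using g(1) degree_pCons_le[of c g] by (simp add: m)
    ultimately show ?thesis by blast
  qed
qed

lemma poly_eq_sum_upto:
  fixes p :: "'a::comm_semiring_1 poly"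
  assumes "degree p \<le> n"
  shows "poly p x = (\<Sum>i\<le>n. coeff p i * x ^ i)"
  unfolding poly_altdef using assms
  by (intro sum.mono_neutral_left) (auto simp: coeff_eq_0)

lemma poly_gamma_expansion:
  assumes "degree g \<le> m div 2" "t \<noteq> -1"
  shows "poly (gamma_expansion m g) t = (1 + t) ^ m * poly g (t / (1 + t) ^ 2)"
proof -
  have "1 + t \<noteq> 0" using assms(2) by (metis add.commute add_eq_0_iff)
  have "t ^ i * (1 + t) ^ (m - 2 * i) = (1 + t) ^ m * (t / (1 + t) ^ 2) ^ i" if "i \<le> m div 2" for i
  proof -
    have "2 * i \<le> m" using \<open>i \<le> m div 2\<close> by auto
    then obtain j where "m = 2 * i + j" using le_Suc_ex by blast
    then show ?thesis using \<open>1 + t \<noteq> 0\<close> by (simp add: power_add power_mult power_divide)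
  qed
  then have "poly (gamma_expansion m g) t = (\<Sum>i\<le>m div 2. (1 + t) ^ m * (coeff g i * (t / (1 + t) ^ 2) ^ i))"
    unfolding gamma_expansion_def poly_sum by (intro sum.cong refl) (simp add: mult_ac)
  also have "\<dots> = (1 + t) ^ m * poly g (t / (1 + t) ^ 2)"
    by (simp add: poly_eq_sum_upto[OF assms(1)] sum_distrib_left)
  finally show ?thesis .
qed

lemma inj_on_gamma_substitution: "inj_on (\<lambda>t::real. t / (1 + t) ^ 2) {0<..<1}"
proof (rule inj_onI)
  fix a b :: real assume a: "a \<in> {0<..<1}" and b: "b \<in> {0<..<1}"
    and "a / (1 + a) ^ 2 = b / (1 + b) ^ 2"
  moreover have "(1 + a) ^ 2 \<noteq> 0" "(1 + b) ^ 2 \<noteq> 0" using a b by auto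
  ultimately have "a * (1 + b) ^ 2 = b * (1 + a) ^ 2" by (simp add: field_simps)
  then have "(a - b) * (1 - a * b) = 0" by (simp add: algebra_simps power2_eq_square)
  moreover have "a * b < 1 * 1" using a b by (intro mult_strict_mono) auto
  ultimately show "a = b" by simp
qed

lemma gamma_poly_eqI:
  assumes "h_poly X m = gamma_expansion m g" "degree g \<le> m div 2"
  shows "gamma_poly X m = g"
  unfolding gamma_poly_def
proof (rule the_equality)
  show "degree g \<le> m div 2 \<and> (\<forall>t::real. t \<noteq> -1 \<longrightarrow>
      poly (h_poly X m) t = (1 + t) ^ m * poly g (t / (1 + t) ^ 2))"
    using assms poly_gamma_expansion by simp
next
  fix g' assume g': "degree g' \<le> m div 2 \<and> (\<forall>t::real. t \<noteq> -1 \<longrightarrow>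
      poly (h_poly X m) t = (1 + t) ^ m * poly g' (t / (1 + t) ^ 2))"
  show "g' = g"
  proof (rule poly_eqI_infinite)
    show "infinite ((\<lambda>t::real. t / (1 + t) ^ 2) ` {0<..<1})"
      using finite_imageD[OF _ inj_on_gamma_substitution] infinite_Ioo[of "0::real" 1] by auto
  next
    fix x assume "x \<in> (\<lambda>t::real. t / (1 + t) ^ 2) ` {0<..<1}"
    then obtain t where t: "t \<in> {0<..<1}" "x = t / (1 + t) ^ 2" by auto
    then have "(1 + t) ^ m * poly g' x = (1 + t) ^ m * poly g x"
      using spec[OF conjunct2[OF g'], of t] poly_gamma_expansion[OF assms(2), of t] assms(1) by simp
    then show "poly g' x = poly g x" using t(1) by simp
  qed
qed

lemma gamma_expansion_odd:
  "gamma_expansion (Suc (2 * n)) g = [:1, 1:] * gamma_expansion (2 * n) g"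
proof -
  have n: "Suc (2 * n) div 2 = n" "2 * n div 2 = n" by simp_all
  show ?thesis
    unfolding gamma_expansion_def sum_distrib_left n
  proof (rule sum.cong[OF refl])
    fix i assume "i \<in> {..n}"
    then have "Suc (2 * n) - 2 * i = Suc (2 * n - 2 * i)" by auto
    then show "smult (coeff g i) ([:0, 1:] ^ i * [:1, 1:] ^ (Suc (2 * n) - 2 * i))
        = [:1, 1:] * smult (coeff g i) ([:0, 1:] ^ i * [:1, 1:] ^ (2 * n - 2 * i))"
      by (simp only: power_Suc mult_smult_right ac_simps)
  qed
qed

lemma poly_gamma_expansion_even_minus_one:
  "poly (gamma_expansion (2 * n) g) (-1) = (-1) ^ n * coeff g n"
proof -
  have "poly (gamma_expansion (2 * n) g) (-1) = (\<Sum>i\<le>n. if i = n then (-1) ^ n * coeff g n else 0)"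
    unfolding gamma_expansion_def poly_sum by (intro sum.cong) auto
  then show ?thesis by simp
qed

section \<open>Vertex links\<close>

lemma sum_vertices_sum_link:
  fixes G :: "nat \<Rightarrow> 'a::semiring_1"
  assumes X: "simplicial_complex X"
  shows "(\<Sum>v\<in>{v. {v} \<in> X}. \<Sum>\<rho>\<in>link X {v}. G (card \<rho>)) = (\<Sum>\<sigma>\<in>X. of_nat (card \<sigma>) * G (card \<sigma> - 1))"
proof -
  have finX: "finite X" using simplicial_complex_finite[OF X] .
  have finV: "finite {v. {v} \<in> X}"
    using finite_Union[OF finX simplicial_complex_finite_face[OF X]] by (auto intro: finite_subset)
  have "(\<Sum>\<rho>\<in>link X {v}. G (card \<rho>)) = (\<Sum>\<sigma>\<in>{\<sigma>\<in>X. v \<in> \<sigma>}. G (card \<sigma> - 1))" for v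
  proof -
    have "card ({v} \<union> \<rho>) - 1 = card \<rho>" if "\<rho> \<in> link X {v}" for \<rho>
      using that simplicial_complex_finite_face[OF X] by (auto simp: link_def)
    then show ?thesis
      using sum_cofaces_eq_sum_link[OF X, where \<sigma> = "{v}" and g = "\<lambda>\<sigma>. G (card \<sigma> - 1)"] by simp
  qed
  then have "(\<Sum>v\<in>{v. {v} \<in> X}. \<Sum>\<rho>\<in>link X {v}. G (card \<rho>))
      = (\<Sum>v\<in>{v. {v} \<in> X}. \<Sum>\<sigma>\<in>{\<sigma>\<in>X. v \<in> \<sigma>}. G (card \<sigma> - 1))"
    by simp
  also have "\<dots> = (\<Sum>\<sigma>\<in>X. \<Sum>v\<in>{v\<in>{v. {v} \<in> X}. v \<in> \<sigma>}. G (card \<sigma> - 1))"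
    by (rule sum.swap_restrict[OF finV finX])
  also have "\<dots> = (\<Sum>\<sigma>\<in>X. of_nat (card \<sigma>) * G (card \<sigma> - 1))"
  proof (rule sum.cong[OF refl])
    fix \<sigma> assume "\<sigma> \<in> X"
    then have "{v\<in>{v. {v} \<in> X}. v \<in> \<sigma>} = \<sigma>" using simplicial_complex_subset[OF X] by blast
    then show "(\<Sum>v\<in>{v\<in>{v. {v} \<in> X}. v \<in> \<sigma>}. G (card \<sigma> - 1)) = of_nat (card \<sigma>) * G (card \<sigma> - 1)"
      by (simp only:) simp
  qed
  finally show ?thesis .
qed

lemma pderiv_face_h_poly_term:
  fixes k j :: nat
  shows "smult (of_nat (k + j)) ([:0, 1:] ^ k * [:1, -1:] ^ j) + [:1, -1:] * pderiv ([:0, 1:] ^ k * [:1, -1:] ^ j)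
       = smult (of_nat k) ([:0, 1:] ^ (k - 1) * [:1, -1::real:] ^ j)" (is "?l = ?r")
proof -
  have d: "pderiv ([:0, 1:] ^ k * [:1, -1:] ^ j)
      = smult (of_nat k) ([:0, 1:] ^ (k - 1) * [:1, -1::real:] ^ j) - smult (of_nat j) ([:0, 1:] ^ k * [:1, -1:] ^ (j - 1))"
    by (simp add: pderiv_mult pderiv_power pderiv_pCons algebra_simps)
  have "poly ?l x = poly ?r x" for x
    unfolding d by (cases k; cases j) (simp_all add: algebra_simps)
  then show ?thesis by (metis poly_eq_poly_eq_iff ext)
qed

lemma smult_sum_right: "smult a (\<Sum>x\<in>A. f x) = (\<Sum>x\<in>A. smult a (f x))"
  by (induction A rule: infinite_finite_induct) (simp_all add: smult_add_right)

lemma sum_face_h_poly_links: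
  assumes X: "simplicial_complex X" and bnd: "\<forall>\<sigma>\<in>X. card \<sigma> \<le> m"
  shows "(\<Sum>v\<in>{v. {v} \<in> X}. face_h_poly (link X {v}) (m - 1))
       = smult (of_nat m) (face_h_poly X m) + [:1, -1:] * pderiv (face_h_poly X m)"
proof -
  have "(\<Sum>v\<in>{v. {v} \<in> X}. face_h_poly (link X {v}) (m - 1))
      = (\<Sum>\<sigma>\<in>X. of_nat (card \<sigma>) * ([:0, 1:] ^ (card \<sigma> - 1) * [:1, -1:] ^ (m - 1 - (card \<sigma> - 1))))"
    unfolding face_h_poly_def by (rule sum_vertices_sum_link[OF X])
  also have "\<dots> = (\<Sum>\<sigma>\<in>X. smult (of_nat m) ([:0, 1:] ^ card \<sigma> * [:1, -1:] ^ (m - card \<sigma>))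
      + [:1, -1:] * pderiv ([:0, 1:] ^ card \<sigma> * [:1, -1:] ^ (m - card \<sigma>)))"
  proof (intro sum.cong refl)
    fix \<sigma> assume "\<sigma> \<in> X"
    then have m: "card \<sigma> + (m - card \<sigma>) = m" using bnd by auto
    have "of_nat (card \<sigma>) * ([:0, 1:] ^ (card \<sigma> - 1) * [:1, -1:] ^ (m - 1 - (card \<sigma> - 1)))
        = smult (of_nat (card \<sigma>)) ([:0, 1:] ^ (card \<sigma> - 1) * [:1, -1::real:] ^ (m - card \<sigma>))"
      by (cases "card \<sigma>") (simp_all add: of_nat_poly)
    also have "\<dots> = smult (of_nat m) ([:0, 1:] ^ card \<sigma> * [:1, -1:] ^ (m - card \<sigma>))
        + [:1, -1:] * pderiv ([:0, 1:] ^ card \<sigma> * [:1, -1:] ^ (m - card \<sigma>))"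
      by (rule pderiv_face_h_poly_term[of "card \<sigma>" "m - card \<sigma>", unfolded m, symmetric])
    finally show "of_nat (card \<sigma>) * ([:0, 1:] ^ (card \<sigma> - 1) * [:1, -1::real:] ^ (m - 1 - (card \<sigma> - 1)))
        = smult (of_nat m) ([:0, 1:] ^ card \<sigma> * [:1, -1:] ^ (m - card \<sigma>))
          + [:1, -1:] * pderiv ([:0, 1:] ^ card \<sigma> * [:1, -1:] ^ (m - card \<sigma>))" .
  qed
  also have "\<dots> = smult (of_nat m) (face_h_poly X m) + [:1, -1:] * pderiv (face_h_poly X m)"
    by (simp add: face_h_poly_def sum.distrib smult_sum_right sum_distrib_left
        higher_pderiv_sum[where n = 1, simplified])
  finally show ?thesis .
qed

lemma gen_homology_sphere_card_link_le:
  assumes sph: "gen_homology_sphere K X m" and "\<rho> \<in> link X \<sigma>"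
  shows "card \<sigma> + card \<rho> \<le> m"
proof -
  have X: "simplicial_complex X" using gen_homology_sphere_simplicial_complex[OF sph] .
  have "\<sigma> \<union> \<rho> \<in> X" "\<rho> \<in> X" "\<sigma> \<inter> \<rho> = {}" using assms(2) by (auto simp: link_def)
  moreover have "\<sigma> \<in> X" using simplicial_complex_subset[OF X \<open>\<sigma> \<union> \<rho> \<in> X\<close>] by blast
  ultimately show ?thesis
    using gen_homology_sphere_card_le[OF sph \<open>\<sigma> \<union> \<rho> \<in> X\<close>] simplicial_complex_finite_face[OF X]
    by (simp add: card_Un_disjoint)
qed

theorem sum_vertex_links_h_poly_minus_one:
  fixes X :: "'v::linorder set set"
  assumes sph: "gen_homology_sphere TYPE('k::field) X (2 * n + 1)"
  shows "(\<Sum>v\<in>{v. {v} \<in> X}. poly (h_poly (link X {v}) (2 * n)) (-1))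
       = 2 * (-1) ^ n * coeff (gamma_poly X (2 * n + 1)) n"
proof -
  define m where "m = 2 * n + 1"
  have sph: "gen_homology_sphere TYPE('k) X m" using sph by (simp add: m_def)
  have X: "simplicial_complex X" using gen_homology_sphere_simplicial_complex[OF sph] .
  have bnd: "\<forall>\<sigma>\<in>X. card \<sigma> \<le> m" using gen_homology_sphere_card_le[OF sph] by blast
  have "palindromic m (face_h_poly X m)"
    using degree_face_h_poly[OF simplicial_complex_finite[OF X] bnd] face_h_poly_self_reciprocal[OF sph]
    by (rule palindromicI_poly)
  then obtain g where g: "degree g \<le> m div 2" "face_h_poly X m = gamma_expansion m g"
    using palindromic_gamma_expansion by blast
  have gamma: "gamma_poly X m = g"
    using g by (intro gamma_poly_eqI) (simp_all add: h_poly_eq_face_h_poly[OF bnd])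
  have H: "face_h_poly X m = [:1, 1:] * gamma_expansion (2 * n) g"
    using g(2) gamma_expansion_odd by (simp add: m_def)
  have m1: "m - 1 = 2 * n" by (simp add: m_def)
  have "h_poly (link X {v}) (2 * n) = face_h_poly (link X {v}) (2 * n)" for v
    using gen_homology_sphere_card_link_le[OF sph, of _ "{v}"]
    by (intro h_poly_eq_face_h_poly) (force simp: m_def)
  then have "(\<Sum>v\<in>{v. {v} \<in> X}. poly (h_poly (link X {v}) (2 * n)) (-1))
      = poly (\<Sum>v\<in>{v. {v} \<in> X}. face_h_poly (link X {v}) (2 * n)) (-1)"
    by (simp add: poly_sum)
  also have "\<dots> = poly (smult (of_nat m) (face_h_poly X m) + [:1, -1:] * pderiv (face_h_poly X m)) (-1)"
    by (simp only: sum_face_h_poly_links[OF X bnd, unfolded m1])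
  also have "\<dots> = 2 * poly (gamma_expansion (2 * n) g) (-1)"
    unfolding H pderiv_mult by (simp add: pderiv_pCons)
  finally show ?thesis
    using gamma by (simp add: poly_gamma_expansion_even_minus_one m_def)
qed

theorem corollary2p2p2:
  fixes X :: "'v::linorder set set" and n :: nat
  assumes "gen_homology_sphere TYPE('k::field) X (2 * n + 1)"
    and "\<forall>v. {v} \<in> X \<longrightarrow> (-1) ^ n * poly (h_poly (link X {v}) (2 * n)) (-1) \<ge> 0"
  shows "coeff (gamma_poly X (2 * n + 1)) n \<ge> 0"
proof -
  have "0 \<le> (\<Sum>v\<in>{v. {v} \<in> X}. (-1) ^ n * poly (h_poly (link X {v}) (2 * n)) (-1))"
    using assms(2) by (intro sum_nonneg) auto
  also have "\<dots> = (-1) ^ n * (2 * (-1) ^ n * coeff (gamma_poly X (2 * n + 1)) n)"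
    by (simp add: sum_distrib_left[symmetric] sum_vertex_links_h_poly_minus_one[OF assms(1)])
  also have "\<dots> = 2 * coeff (gamma_poly X (2 * n + 1)) n"
    by (simp flip: power_add mult.assoc)
  finally show ?thesis by simp
qed

end
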